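(* Let $\mathbb{F}$ be an infinite field with $\operatorname{char}(\mathbb{F})\neq 2$ and let $G$ be a non-abelian group with a group involution $\ast$ and a non-trivial orientation $\sigma:G\to\{\pm1\}$ such that $gg^\ast\in N=\ker\sigma$ for all $g\in G$. Suppose $\mathbb{F}G$ is normal with respect to the oriented involution $\circledast$ and that $N$ is abelian. Then $x^\ast=x$ for all $x\in G\setminus N$, and $n^\ast=a^{-1}na=ana^{-1}$ for all $n\in N$ and all $a\in G\setminus N$.
   Context: A group involution on $G$ is a map $\ast:G\to G$ with $(gh)^\ast=h^\ast g^\ast$ and $(g^\ast)^\ast=g$. An orientation is a group homomorphism $\sigma:G\to\{\pm1\}$. The oriented involution is $(\sum_g\alpha_g g)^\circledast=\sum_g\alpha_g\sigma(g)g^\ast$ on $\mathbb{F}G$. $\mathbb{F}G$ is normal if $\alpha\alpha^\circledast=\alpha^\circledast\alpha$ for all $\alpha\in\mathbb{F}G$. *)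

theory Defs
  imports "HOL-Algebra.Group"
begin

definition group_involution :: "('g, 'b) monoid_scheme \<Rightarrow> ('g \<Rightarrow> 'g) \<Rightarrow> bool" where
  "group_involution G s \<longleftrightarrow>
     (\<forall>g\<in>carrier G. s g \<in> carrier G) \<and>
     (\<forall>g\<in>carrier G. \<forall>h\<in>carrier G. s (g \<otimes>\<^bsub>G\<^esub> h) = s h \<otimes>\<^bsub>G\<^esub> s g) \<and>
     (\<forall>g\<in>carrier G. s (s g) = g)"

definition orientation :: "('g, 'b) monoid_scheme \<Rightarrow> ('g \<Rightarrow> int) \<Rightarrow> bool" where
  "orientation G \<sigma> \<longleftrightarrow>
     (\<forall>g\<in>carrier G. \<sigma> g \<in> {1, -1}) \<and>
     (\<forall>g\<in>carrier G. \<forall>h\<in>carrier G. \<sigma> (g \<otimes>\<^bsub>G\<^esub> h) = \<sigma> g * \<sigma> h)"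

definition orient_kernel :: "('g, 'b) monoid_scheme \<Rightarrow> ('g \<Rightarrow> int) \<Rightarrow> 'g set" where
  "orient_kernel G \<sigma> = {g \<in> carrier G. \<sigma> g = 1}"

text \<open>Elements of the group ring FG: finitely supported coefficient functions on the carrier.\<close>
definition group_ring_elem :: "('g, 'b) monoid_scheme \<Rightarrow> ('g \<Rightarrow> 'f::field) \<Rightarrow> bool" where
  "group_ring_elem G a \<longleftrightarrow>
     (\<forall>x. x \<notin> carrier G \<longrightarrow> a x = 0) \<and> finite {x \<in> carrier G. a x \<noteq> 0}"

definition gr_mult :: "('g, 'b) monoid_scheme \<Rightarrow> ('g \<Rightarrow> 'f::field) \<Rightarrow> ('g \<Rightarrow> 'f) \<Rightarrow> 'g \<Rightarrow> 'f" where
  "gr_mult G a b x =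
     (if x \<in> carrier G
      then (\<Sum>g\<in>{g \<in> carrier G. a g \<noteq> 0}. a g * b (inv\<^bsub>G\<^esub> g \<otimes>\<^bsub>G\<^esub> x))
      else 0)"

text \<open>Oriented involution: (sum a_g g)^o = sum a_g sigma(g) g^*, so the coefficient at h is
  sigma(h^*) a_(h^*).\<close>
definition oriented_inv :: "('g, 'b) monoid_scheme \<Rightarrow> ('g \<Rightarrow> 'g) \<Rightarrow> ('g \<Rightarrow> int) \<Rightarrow> ('g \<Rightarrow> 'f::field) \<Rightarrow> 'g \<Rightarrow> 'f" where
  "oriented_inv G s \<sigma> a h = (if h \<in> carrier G then of_int (\<sigma> (s h)) * a (s h) else 0)"

definition normal_group_ring :: "('g, 'b) monoid_scheme \<Rightarrow> ('g \<Rightarrow> 'g) \<Rightarrow> ('g \<Rightarrow> int) \<Rightarrow> 'f::field itself \<Rightarrow> bool" where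
  "normal_group_ring G s \<sigma> (_::'f itself) \<longleftrightarrow>
     (\<forall>a :: 'g \<Rightarrow> 'f. group_ring_elem G a \<longrightarrow>
        gr_mult G a (oriented_inv G s \<sigma> a) = gr_mult G (oriented_inv G s \<sigma> a) a)"

end

(*
  Normality applied to the element g + h of FG yields, once the diagonal terms are cancelled
  (normality of g alone gives g g* = g* g), the identity of point masses
    \<sigma>(h) [g h*] + \<sigma>(g) [h g*] = \<sigma>(g) [g* h] + \<sigma>(h) [h* g].
  Since char F \<noteq> 2, a sum of two point masses determines its support up to order, so
  {g h*, h g*} = {g* h, h* g} when \<sigma>(g) = \<sigma>(h), and {g h*, g* h} = {h g*, h* g} otherwise.
  As N is abelian of index 2 but G is not abelian, every x outside N fails to commute with some
  n \<in> N; for such a pair the relations force x n = n* x*, and comparing x with y = x n, which is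
  fixed by *, gives x* = x.  The formula for n* then follows according to whether a commutes with n.
*)

theory Submission
  imports Defs "HOL-Library.Indicator_Function"
begin

lemma indicator_pair_eq_cases:
  assumes two: "(2::'f::field) \<noteq> 0"
    and eq: "\<And>z. (indicator {p} z + indicator {q} z :: 'f) = indicator {r} z + indicator {t} z"
  shows "(p = r \<and> q = t) \<or> (p = t \<and> q = r)"
proof -
  have at_p: "(indicator {p} p + indicator {q} p :: 'f) = indicator {r} p + indicator {t} p"
    and at_q: "(indicator {p} q + indicator {q} q :: 'f) = indicator {r} q + indicator {t} q"
    using eq by blast+
  have "(1::'f) + 1 \<noteq> 0" using two by simp
  then show ?thesis
    using at_p at_q
    by (cases "p = r"; cases "p = t"; cases "q = r"; cases "q = t"; cases "p = q") (auto simp: indicator_def)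
qed

context group
begin

lemma gr_mult_eq_sum:
  assumes "finite S" "S \<subseteq> carrier G" "\<forall>g\<in>carrier G - S. a g = 0"
  shows "gr_mult G a b x = (if x \<in> carrier G then (\<Sum>g\<in>S. a g * b (inv g \<otimes> x)) else 0)"
proof (cases "x \<in> carrier G")
  case True
  have "(\<Sum>g\<in>{g \<in> carrier G. a g \<noteq> 0}. a g * b (inv g \<otimes> x)) = (\<Sum>g\<in>S. a g * b (inv g \<otimes> x))"
    by (rule sum.mono_neutral_left) (use assms in auto)
  then show ?thesis using True by (simp add: gr_mult_def)
qed (simp add: gr_mult_def)

lemma gr_mult_indicator_left:
  assumes "p \<in> carrier G"
  shows "gr_mult G (\<lambda>k. c * indicator {p} k) b x =
    (if x \<in> carrier G then c * b (inv p \<otimes> x) else 0)"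
  using gr_mult_eq_sum[of "{p}" "\<lambda>k. c * indicator {p} k" b x] assms by auto

lemma gr_mult_indicator2_left:
  assumes "p \<in> carrier G" "q \<in> carrier G" "p \<noteq> q"
  shows "gr_mult G (\<lambda>k. c * indicator {p} k + d * indicator {q} k) b x =
    (if x \<in> carrier G then c * b (inv p \<otimes> x) + d * b (inv q \<otimes> x) else 0)"
  using gr_mult_eq_sum[of "{p,q}" "\<lambda>k. c * indicator {p} k + d * indicator {q} k" b x] assms
  by auto

lemma indicator_inv_mult:
  assumes "g \<in> carrier G" "p \<in> carrier G" "x \<in> carrier G"
  shows "indicator {p} (inv g \<otimes> x) = indicator {g \<otimes> p} x"
  using assms by (auto simp: indicator_def inv_solve_left')

lemma group_ring_elem_indicator2:
  assumes "p \<in> carrier G" "q \<in> carrier G"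
  shows "group_ring_elem G (\<lambda>k. c * indicator {p} k + d * indicator {q} k)"
proof -
  have "{x \<in> carrier G. c * indicator {p} x + d * indicator {q} x \<noteq> 0} \<subseteq> {p, q}"
    by (auto simp: indicator_eq_0_iff)
  then have "finite {x \<in> carrier G. c * indicator {p} x + d * indicator {q} x \<noteq> 0}"
    by (rule finite_subset) simp
  then show ?thesis
    using assms unfolding group_ring_elem_def by (auto split: split_indicator)
qed

end

locale oriented_involution = group G for G (structure) +
  fixes s :: "'a \<Rightarrow> 'a" and \<sigma> :: "'a \<Rightarrow> int"
  assumes involution: "group_involution G s"
    and orientation: "orientation G \<sigma>"
    and mult_star_in_kernel: "\<forall>g\<in>carrier G. g \<otimes> s g \<in> orient_kernel G \<sigma>"
begin

abbreviation N where "N \<equiv> orient_kernel G \<sigma>"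

lemma star_closed [simp]: "g \<in> carrier G \<Longrightarrow> s g \<in> carrier G"
  and star_mult: "g \<in> carrier G \<Longrightarrow> h \<in> carrier G \<Longrightarrow> s (g \<otimes> h) = s h \<otimes> s g"
  and star_star [simp]: "g \<in> carrier G \<Longrightarrow> s (s g) = g"
  using involution unfolding group_involution_def by auto

lemma star_eq_iff: "g \<in> carrier G \<Longrightarrow> k \<in> carrier G \<Longrightarrow> s k = g \<longleftrightarrow> k = s g"
  by auto

lemma sigma_cases: "g \<in> carrier G \<Longrightarrow> \<sigma> g = 1 \<or> \<sigma> g = -1"
  and sigma_mult: "g \<in> carrier G \<Longrightarrow> h \<in> carrier G \<Longrightarrow> \<sigma> (g \<otimes> h) = \<sigma> g * \<sigma> h"
  using orientation unfolding orientation_def by auto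

lemma kernel_iff: "g \<in> N \<longleftrightarrow> g \<in> carrier G \<and> \<sigma> g = 1"
  unfolding orient_kernel_def by auto

lemma sigma_outside_kernel: "g \<in> carrier G - N \<Longrightarrow> \<sigma> g = -1"
  using sigma_cases kernel_iff by auto

lemma sigma_inv: "g \<in> carrier G \<Longrightarrow> \<sigma> (inv g) = \<sigma> g"
  using sigma_mult[of g "inv g"] sigma_cases[of g] sigma_cases[of "inv g"]
    sigma_mult[of \<one> \<one>] sigma_cases[of \<one>]
  by auto

lemma sigma_star: "g \<in> carrier G \<Longrightarrow> \<sigma> (s g) = \<sigma> g"
  using mult_star_in_kernel sigma_mult[of g "s g"] sigma_cases[of g] sigma_cases[of "s g"]
  by (auto simp: kernel_iff)

lemma kernel_mult_closed: "g \<in> N \<Longrightarrow> h \<in> N \<Longrightarrow> g \<otimes> h \<in> N"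
  by (simp add: kernel_iff sigma_mult)

lemma star_kernel_closed: "n \<in> N \<Longrightarrow> s n \<in> N"
  by (simp add: kernel_iff sigma_star)

lemma inv_mult_in_kernel:
  "g \<in> carrier G \<Longrightarrow> h \<in> carrier G \<Longrightarrow> \<sigma> g = \<sigma> h \<Longrightarrow> inv g \<otimes> h \<in> N"
  using sigma_cases[of g] by (auto simp: kernel_iff sigma_mult sigma_inv)

lemma outside_kernel_coset:
  assumes "x \<in> carrier G - N" "g \<in> carrier G - N"
  obtains k where "k \<in> N" "g = x \<otimes> k"
proof
  show "inv x \<otimes> g \<in> N"
    using assms by (intro inv_mult_in_kernel) (auto simp: sigma_outside_kernel)
  show "g = x \<otimes> (inv x \<otimes> g)"
    using assms by (simp add: m_assoc[symmetric])
qed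

lemma oriented_inv_indicator2:
  assumes "g \<in> carrier G" "h \<in> carrier G"
  shows "oriented_inv G s \<sigma> (\<lambda>k. c * indicator {g} k + d * indicator {h} k)
    = (\<lambda>k. c * of_int (\<sigma> g) * indicator {s g} k + d * of_int (\<sigma> h) * indicator {s h} k)"
proof
  fix k
  show "oriented_inv G s \<sigma> (\<lambda>k. c * indicator {g} k + d * indicator {h} k) k
    = c * of_int (\<sigma> g) * indicator {s g} k + d * of_int (\<sigma> h) * indicator {s h} k"
    using assms star_eq_iff[of g k] star_eq_iff[of h k]
    by (cases "k \<in> carrier G") (auto simp: oriented_inv_def algebra_simps split: split_indicator)
qed

end

text \<open>The parameter \<open>F\<close> only records the coefficient field of the group ring.\<close>

locale normal_oriented_group_ring = oriented_involution +
  fixes F :: "'f::field itself"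
  assumes normal: "normal_group_ring G s \<sigma> F"
    and two_neq_zero: "(2::'f) \<noteq> 0"
begin

lemma normal_comm_at:
  "group_ring_elem G (a :: 'a \<Rightarrow> 'f) \<Longrightarrow>
    gr_mult G a (oriented_inv G s \<sigma> a) z = gr_mult G (oriented_inv G s \<sigma> a) a z"
  using normal unfolding normal_group_ring_def by metis

lemma mult_star_comm:
  assumes g: "g \<in> carrier G"
  shows "g \<otimes> s g = s g \<otimes> g"
proof -
  let ?z = "g \<otimes> s g"
  have elem: "group_ring_elem G (indicator {g} :: 'a \<Rightarrow> 'f)"
    using group_ring_elem_indicator2[OF g g, of 1 0] by simp
  have inv: "oriented_inv G s \<sigma> (indicator {g} :: 'a \<Rightarrow> 'f)
      = (\<lambda>k. of_int (\<sigma> g) * indicator {s g} k)"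
    using oriented_inv_indicator2[OF g g, of 1 0] by simp
  have "gr_mult G (indicator {g}) (\<lambda>k. of_int (\<sigma> g) * indicator {s g} k) ?z
      = gr_mult G (\<lambda>k. of_int (\<sigma> g) * indicator {s g} k) (indicator {g} :: 'a \<Rightarrow> 'f) ?z"
    using normal_comm_at[OF elem, of ?z] by (simp only: inv)
  then have "(of_int (\<sigma> g) * indicator {g \<otimes> s g} ?z :: 'f)
      = of_int (\<sigma> g) * indicator {s g \<otimes> g} ?z"
    by (simp add: gr_mult_indicator_left[OF g, of 1, simplified]
        gr_mult_indicator_left[OF star_closed[OF g]] indicator_inv_mult g)
  moreover have "(of_int (\<sigma> g) :: 'f) \<noteq> 0"
    using sigma_cases[OF g] by auto
  ultimately show ?thesis
    by (auto split: split_indicator_asm)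
qed

lemma normal_pair_identity:
  assumes g: "g \<in> carrier G" and h: "h \<in> carrier G" and "g \<noteq> h"
  shows "(of_int (\<sigma> h) * indicator {g \<otimes> s h} z + of_int (\<sigma> g) * indicator {h \<otimes> s g} z :: 'f)
    = of_int (\<sigma> g) * indicator {s g \<otimes> h} z + of_int (\<sigma> h) * indicator {s h \<otimes> g} z"
proof (cases "z \<in> carrier G")
  case z: True
  let ?a = "\<lambda>k. (1::'f) * indicator {g} k + 1 * indicator {h} k"
  let ?b = "\<lambda>k. (1::'f) * of_int (\<sigma> g) * indicator {s g} k + 1 * of_int (\<sigma> h) * indicator {s h} k"
  have sgh: "s g \<noteq> s h"
    using \<open>g \<noteq> h\<close> star_star[OF g] star_star[OF h] by metis
  have "gr_mult G ?a ?b z = gr_mult G ?b ?a z"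
    using normal_comm_at[OF group_ring_elem_indicator2[OF g h], of 1 1 z]
    by (simp only: oriented_inv_indicator2[OF g h])
  then have "(of_int (\<sigma> g) * indicator {g \<otimes> s g} z + of_int (\<sigma> h) * indicator {g \<otimes> s h} z
      + (of_int (\<sigma> g) * indicator {h \<otimes> s g} z + of_int (\<sigma> h) * indicator {h \<otimes> s h} z) :: 'f)
    = of_int (\<sigma> g) * (indicator {s g \<otimes> g} z + indicator {s g \<otimes> h} z)
      + of_int (\<sigma> h) * (indicator {s h \<otimes> g} z + indicator {s h \<otimes> h} z)"
    by (simp add: gr_mult_indicator2_left[OF g h \<open>g \<noteq> h\<close>, of 1 1, simplified]
        gr_mult_indicator2_left[OF star_closed[OF g] star_closed[OF h] sgh] z indicator_inv_mult g h)
  then show ?thesis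
    by (simp add: mult_star_comm[OF g] mult_star_comm[OF h] algebra_simps)
next
  case False
  then have "z \<noteq> g \<otimes> s h" "z \<noteq> h \<otimes> s g" "z \<noteq> s g \<otimes> h" "z \<noteq> s h \<otimes> g"
    using g h by auto
  then show ?thesis by simp
qed

lemma pair_cases_same_sign:
  assumes g: "g \<in> carrier G" and h: "h \<in> carrier G" and "g \<noteq> h" and "\<sigma> g = \<sigma> h"
  shows "(g \<otimes> s h = s g \<otimes> h \<and> h \<otimes> s g = s h \<otimes> g) \<or> (g \<otimes> s h = s h \<otimes> g \<and> h \<otimes> s g = s g \<otimes> h)"
proof (rule indicator_pair_eq_cases[OF two_neq_zero])
  fix z
  have "(of_int (\<sigma> g) :: 'f) \<noteq> 0"
    using sigma_cases[OF g] by auto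
  then show "(indicator {g \<otimes> s h} z + indicator {h \<otimes> s g} z :: 'f)
      = indicator {s g \<otimes> h} z + indicator {s h \<otimes> g} z"
    using normal_pair_identity[OF g h \<open>g \<noteq> h\<close>, of z] \<open>\<sigma> g = \<sigma> h\<close>
    by (simp add: distrib_left[symmetric])
qed

lemma pair_cases_opposite_sign:
  assumes g: "g \<in> carrier G" and h: "h \<in> carrier G" and "\<sigma> h = - \<sigma> g"
  shows "(g \<otimes> s h = h \<otimes> s g \<and> s g \<otimes> h = s h \<otimes> g) \<or> (g \<otimes> s h = s h \<otimes> g \<and> s g \<otimes> h = h \<otimes> s g)"
proof (rule indicator_pair_eq_cases[OF two_neq_zero])
  fix z
  have "g \<noteq> h" "(of_int (\<sigma> g) :: 'f) \<noteq> 0"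
    using sigma_cases[OF g] \<open>\<sigma> h = - \<sigma> g\<close> by auto
  moreover have "of_int (\<sigma> g) * (indicator {g \<otimes> s h} z + indicator {s g \<otimes> h} z)
      = (of_int (\<sigma> g) * (indicator {h \<otimes> s g} z + indicator {s h \<otimes> g} z) :: 'f)"
    using normal_pair_identity[OF g h \<open>g \<noteq> h\<close>, of z] \<open>\<sigma> h = - \<sigma> g\<close>
    by (simp add: algebra_simps)
  ultimately show "(indicator {g \<otimes> s h} z + indicator {s g \<otimes> h} z :: 'f)
      = indicator {h \<otimes> s g} z + indicator {s h \<otimes> g} z"
    by simp
qed

lemma star_of_noncommuting:
  assumes x: "x \<in> carrier G - N" and n: "n \<in> N" and "x \<otimes> n \<noteq> n \<otimes> x"
  shows "x \<otimes> n = s n \<otimes> s x \<and> s x \<otimes> s n = n \<otimes> x"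
proof -
  have [simp]: "n \<in> carrier G"
    using n by (simp add: kernel_iff)
  have "\<sigma> (s n) = - \<sigma> x"
    using x n by (simp add: sigma_outside_kernel sigma_star kernel_iff)
  then show ?thesis
    using pair_cases_opposite_sign[of x "s n"] x \<open>x \<otimes> n \<noteq> n \<otimes> x\<close> by auto
qed

context
  assumes kernel_comm: "\<forall>x\<in>N. \<forall>y\<in>N. x \<otimes> y = y \<otimes> x"
    and noncomm: "\<not> comm_group G"
begin

lemma exists_noncommuting_in_kernel:
  assumes x: "x \<in> carrier G - N"
  shows "\<exists>n\<in>N. x \<otimes> n \<noteq> n \<otimes> x"
proof (rule ccontr)
  assume "\<not> ?thesis"
  then have x_centralizes: "x \<otimes> n = n \<otimes> x" if "n \<in> N" for n
    using that by blast
  have kernel_central: "g \<otimes> n = n \<otimes> g" if g: "g \<in> carrier G" and n: "n \<in> N" for g n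
  proof (cases "g \<in> N")
    case True
    then show ?thesis using kernel_comm n by blast
  next
    case False
    then obtain k where k: "k \<in> N" and gk: "g = x \<otimes> k"
      using outside_kernel_coset[OF x] g by blast
    have [simp]: "k \<in> carrier G" "n \<in> carrier G" "x \<in> carrier G"
      using k n x by (auto simp: kernel_iff)
    have "g \<otimes> n = x \<otimes> (n \<otimes> k)"
      using kernel_comm k n by (simp add: gk m_assoc)
    also have "\<dots> = n \<otimes> g"
      using x_centralizes[OF n] by (simp add: gk m_assoc[symmetric])
    finally show ?thesis .
  qed
  have "comm_group G"
  proof (rule group_comm_groupI)
    fix g h
    assume g: "g \<in> carrier G" and h: "h \<in> carrier G"
    show "g \<otimes> h = h \<otimes> g"
    proof (cases "g \<in> N \<or> h \<in> N")
      case True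
      then show ?thesis using kernel_central g h by metis
    next
      case False
      then obtain k where k: "k \<in> N" and hk: "h = g \<otimes> k"
        using outside_kernel_coset[of g h] g h by blast
      have [simp]: "k \<in> carrier G"
        using k by (simp add: kernel_iff)
      have "g \<otimes> h = g \<otimes> (k \<otimes> g)"
        using kernel_central[OF g k] by (simp add: hk)
      also have "\<dots> = h \<otimes> g"
        using g by (simp add: hk m_assoc)
      finally show ?thesis .
    qed
  qed
  with noncomm show False ..
qed

lemma star_fixes_outside_kernel:
  assumes x: "x \<in> carrier G - N"
  shows "s x = x"
proof -
  obtain n where n: "n \<in> N" and noncomm_xn: "x \<otimes> n \<noteq> n \<otimes> x"
    using exists_noncommuting_in_kernel[OF x] by blast
  have [simp]: "n \<in> carrier G" "x \<in> carrier G"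
    using n x by (auto simp: kernel_iff)
  define y where "y = x \<otimes> n"
  have y: "y \<in> carrier G - N"
    using x n by (auto simp: y_def kernel_iff sigma_mult sigma_outside_kernel)
  have "x \<noteq> y"
    using noncomm_xn by (auto simp: y_def)
  have sy: "s y = y"
    using star_of_noncommuting[OF x n noncomm_xn] by (simp add: y_def star_mult)
  have "\<sigma> x = \<sigma> y"
    using x y by (simp add: sigma_outside_kernel)
  then have "x \<otimes> y = s x \<otimes> y \<or> x \<otimes> y = y \<otimes> x"
    using pair_cases_same_sign[of x y] x y \<open>x \<noteq> y\<close> sy by auto
  moreover have "x \<otimes> y \<noteq> y \<otimes> x"
    using noncomm_xn by (simp add: y_def m_assoc)
  ultimately show ?thesis
    using y by auto
qed

lemma star_fixes_centralizer_in_kernel: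
  assumes x: "x \<in> carrier G - N" and m: "m \<in> N" and comm_xm: "x \<otimes> m = m \<otimes> x"
  shows "s m = m"
proof -
  obtain n where n: "n \<in> N" and noncomm_xn: "x \<otimes> n \<noteq> n \<otimes> x"
    using exists_noncommuting_in_kernel[OF x] by blast
  have [simp]: "n \<in> carrier G" "m \<in> carrier G" "x \<in> carrier G"
    using n m x by (auto simp: kernel_iff)
  have "n \<otimes> m \<otimes> x = n \<otimes> x \<otimes> m"
    using comm_xm by (simp add: m_assoc)
  then have "x \<otimes> (n \<otimes> m) \<noteq> (n \<otimes> m) \<otimes> x"
    using noncomm_xn by (simp add: m_assoc[symmetric])
  then have "s x \<otimes> s (n \<otimes> m) = n \<otimes> m \<otimes> x"
    using star_of_noncommuting[OF x kernel_mult_closed[OF n m]] by simp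
  moreover have "s (n \<otimes> m) = s n \<otimes> s m"
    using kernel_comm star_kernel_closed[OF n] star_kernel_closed[OF m] by (simp add: star_mult)
  moreover have "n \<otimes> m \<otimes> x = s x \<otimes> s n \<otimes> m"
    using star_of_noncommuting[OF x n noncomm_xn] comm_xm by (simp add: m_assoc)
  ultimately show ?thesis
    by (simp add: m_assoc)
qed

lemma conj_inv_eq_conj:
  assumes n: "n \<in> N" and a: "a \<in> carrier G - N"
  shows "inv a \<otimes> n \<otimes> a = a \<otimes> n \<otimes> inv a"
proof -
  have [simp]: "n \<in> carrier G" "a \<in> carrier G"
    using n a by (auto simp: kernel_iff)
  have "a \<otimes> a \<in> N"
    using a by (simp add: kernel_iff sigma_mult sigma_outside_kernel)
  then have "n \<otimes> (a \<otimes> a) = (a \<otimes> a) \<otimes> n"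
    using kernel_comm n by blast
  then have "inv a \<otimes> (n \<otimes> (a \<otimes> a)) \<otimes> inv a = inv a \<otimes> ((a \<otimes> a) \<otimes> n) \<otimes> inv a"
    by simp
  moreover have "inv a \<otimes> (n \<otimes> (a \<otimes> a)) \<otimes> inv a = inv a \<otimes> n \<otimes> a"
    by (simp add: m_assoc)
  moreover have "inv a \<otimes> ((a \<otimes> a) \<otimes> n) \<otimes> inv a = a \<otimes> n \<otimes> inv a"
    by (simp add: m_assoc[symmetric])
  ultimately show ?thesis
    by simp
qed

lemma star_kernel_eq_conj:
  assumes n: "n \<in> N" and a: "a \<in> carrier G - N"
  shows "s n = a \<otimes> n \<otimes> inv a"
proof -
  have [simp]: "n \<in> carrier G" "a \<in> carrier G"
    using n a by (auto simp: kernel_iff)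
  show ?thesis
  proof (cases "a \<otimes> n = n \<otimes> a")
    case True
    then show ?thesis
      using star_fixes_centralizer_in_kernel[OF a n] by (simp add: m_assoc)
  next
    case False
    then have "a \<otimes> n = s n \<otimes> a"
      using star_of_noncommuting[OF a n] star_fixes_outside_kernel[OF a] by simp
    then show ?thesis
      by (simp add: m_assoc)
  qed
qed

end

end

theorem lemma9:
  fixes G :: "('g, 'b) monoid_scheme" and s :: "'g \<Rightarrow> 'g" and \<sigma> :: "'g \<Rightarrow> int"
  assumes "group G"
    and "infinite (UNIV :: 'f::field set)"
    and "(2::'f) \<noteq> 0"
    and "\<not> comm_group G"
    and "group_involution G s"
    and "orientation G \<sigma>"
    and "\<exists>g\<in>carrier G. \<sigma> g \<noteq> 1"
    and "\<forall>g\<in>carrier G. g \<otimes>\<^bsub>G\<^esub> s g \<in> orient_kernel G \<sigma>"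
    and "normal_group_ring G s \<sigma> TYPE('f)"
    and "\<forall>x\<in>orient_kernel G \<sigma>. \<forall>y\<in>orient_kernel G \<sigma>. x \<otimes>\<^bsub>G\<^esub> y = y \<otimes>\<^bsub>G\<^esub> x"
  shows "(\<forall>x\<in>carrier G - orient_kernel G \<sigma>. s x = x) \<and>
         (\<forall>n\<in>orient_kernel G \<sigma>. \<forall>a\<in>carrier G - orient_kernel G \<sigma>.
            s n = inv\<^bsub>G\<^esub> a \<otimes>\<^bsub>G\<^esub> n \<otimes>\<^bsub>G\<^esub> a \<and> s n = a \<otimes>\<^bsub>G\<^esub> n \<otimes>\<^bsub>G\<^esub> inv\<^bsub>G\<^esub> a)"
proof -
  interpret normal_oriented_group_ring G s \<sigma> "TYPE('f)"
    using assms by (simp add: normal_oriented_group_ring_def normal_oriented_group_ring_axioms_def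
        oriented_involution_def oriented_involution_axioms_def)
  show ?thesis
    using star_fixes_outside_kernel[OF assms(10,4)] star_kernel_eq_conj[OF assms(10,4)]
      conj_inv_eq_conj[OF assms(10,4)]
    by auto
qed

end
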